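(* Let $n\ge1$ and let $A$ be an admissible set in $\{1,3,\dots,2n+1\}$ with associated vector $(a(1),\dots,a(2n))$. Let $\widehat{A}$ be the set of primary odd-odd-descent permutations $\sigma\in\mathcal{W}^*_{2n+1}$ whose set of valleys is exactly the set of white elements of $A$ and whose set of peaks is exactly the set of black elements of $A$. Then \[ \sum_{\sigma\in\widehat{A}} q^{\mathrm{art}(\sigma)}=\prod_{i=1}^{2n}[a(i)]_q . \]
   Context: $[k]_q=1+q+\cdots+q^{k-1}$. For $\sigma\in\mathfrak{S}_m$, a descent is an index $i$ with $\sigma_i>\sigma_{i+1}$; $\mathcal{W}^*_{2n+1}$ is the set of permutations of $[2n+1]$ whose every descent pair $(\sigma_i,\sigma_{i+1})$ consists of two odd numbers and whose last entry is odd. With $\sigma_0=\sigma_{m+1}=0$, $\sigma_i$ is a peak if $\sigma_{i-1}<\sigma_i>\sigma_{i+1}$, a valley if $\sigma_{i-1}>\sigma_i<\sigma_{i+1}$, a double descent if $\sigma_{i-1}>\sigma_i>\sigma_{i+1}$. $\mathrm{art}(\sigma)=\sum_{i=1}^m(v(i)-p(i))$, where $v(i)$ (resp. $p(i)$) counts valleys (resp. peaks) less than $i$ located to the left of $i$ in $\sigma$. $\sigma\in\mathcal{W}^*_{2n+1}$ is primary odd-odd-descent if it has no double descent and $\sigma_{2n}<\sigma_{2n+1}$. An admissible set in $\{1,3,\dots,2n+1\}$ is a set $A$ of odd numbers in $\{1,3,\dots,2n+1\}$, each colored white or black, such that: (i) $A$ has $k$ white and $k+1$ black elements for some $k\ge0$,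 and $2n+1$ is black; (ii) for each $i\in[2n]$, $A\cap\{1,\dots,i\}$ has at least as many white as black elements. Its vector is $a(i)=f(i)-g(i)+1$ for $1\le i\le 2n$, where $f(i)$ (resp. $g(i)$) is the number of white (resp. black) elements of $A$ less than $i$. *)

theory Defs
  imports Main
begin

text \<open>Permutations of [m] are lists xs with distinct xs and set xs = {1..m}.
  Entries are 1-based, with the convention sigma_0 = sigma_(m+1) = 0.\<close>

definition is_perm :: "nat \<Rightarrow> nat list \<Rightarrow> bool" where
  "is_perm m xs \<longleftrightarrow> distinct xs \<and> set xs = {1..m}"

definition ent :: "nat list \<Rightarrow> nat \<Rightarrow> nat" where
  "ent xs i = (if 1 \<le> i \<and> i \<le> length xs then xs ! (i - 1) else 0)"

definition is_descent :: "nat list \<Rightarrow> nat \<Rightarrow> bool" where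
  "is_descent xs i \<longleftrightarrow> 1 \<le> i \<and> i < length xs \<and> ent xs i > ent xs (Suc i)"

definition Wstar :: "nat \<Rightarrow> nat list set" where
  "Wstar n = {xs. is_perm (2*n+1) xs
      \<and> (\<forall>i. is_descent xs i \<longrightarrow> odd (ent xs i) \<and> odd (ent xs (Suc i)))
      \<and> odd (ent xs (2*n+1))}"

definition peak_pos :: "nat list \<Rightarrow> nat \<Rightarrow> bool" where
  "peak_pos xs i \<longleftrightarrow> 1 \<le> i \<and> i \<le> length xs
      \<and> ent xs (i - 1) < ent xs i \<and> ent xs i > ent xs (Suc i)"

definition valley_pos :: "nat list \<Rightarrow> nat \<Rightarrow> bool" where
  "valley_pos xs i \<longleftrightarrow> 1 \<le> i \<and> i \<le> length xs
      \<and> ent xs (i - 1) > ent xs i \<and> ent xs i < ent xs (Suc i)"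

definition ddesc_pos :: "nat list \<Rightarrow> nat \<Rightarrow> bool" where
  "ddesc_pos xs i \<longleftrightarrow> 1 \<le> i \<and> i \<le> length xs
      \<and> ent xs (i - 1) > ent xs i \<and> ent xs i > ent xs (Suc i)"

definition peaks :: "nat list \<Rightarrow> nat set" where
  "peaks xs = {ent xs i | i. peak_pos xs i}"

definition valleys :: "nat list \<Rightarrow> nat set" where
  "valleys xs = {ent xs i | i. valley_pos xs i}"

text \<open>art(sigma) = sum over values x of (v(x) - p(x)); we sum over the position k of x,
  v counts valley positions j left of k with value < sigma_k, similarly p for peaks.\<close>
definition art :: "nat list \<Rightarrow> int" where
  "art xs = (\<Sum>k=1..length xs.
      int (card {j. j < k \<and> valley_pos xs j \<and> ent xs j < ent xs k})
    - int (card {j. j < k \<and> peak_pos xs j \<and> ent xs j < ent xs k}))"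

definition primary :: "nat \<Rightarrow> nat list \<Rightarrow> bool" where
  "primary n xs \<longleftrightarrow> xs \<in> Wstar n \<and> (\<forall>i. \<not> ddesc_pos xs i)
      \<and> ent xs (2*n) < ent xs (2*n+1)"

text \<open>A coloured set A is given by its white part Wh and black part Bl.\<close>
definition admissible :: "nat \<Rightarrow> nat set \<Rightarrow> nat set \<Rightarrow> bool" where
  "admissible n Wh Bl \<longleftrightarrow>
      Wh \<subseteq> {x\<in>{1..2*n+1}. odd x} \<and> Bl \<subseteq> {x\<in>{1..2*n+1}. odd x} \<and> Wh \<inter> Bl = {}
    \<and> card Bl = card Wh + 1 \<and> 2*n+1 \<in> Bl
    \<and> (\<forall>i\<in>{1..2*n}. card (Bl \<inter> {1..i}) \<le> card (Wh \<inter> {1..i}))"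

definition avec :: "nat set \<Rightarrow> nat set \<Rightarrow> nat \<Rightarrow> int" where
  "avec Wh Bl i = int (card {x\<in>Wh. x < i}) - int (card {x\<in>Bl. x < i}) + 1"

definition qint :: "'a::comm_ring_1 \<Rightarrow> int \<Rightarrow> 'a" where
  "qint q k = (\<Sum>j<nat k. q ^ j)"

definition Ahat :: "nat \<Rightarrow> nat set \<Rightarrow> nat set \<Rightarrow> nat list set" where
  "Ahat n Wh Bl = {xs. primary n xs \<and> valleys xs = Wh \<and> peaks xs = Bl}"

end

theory Submission
  imports Defs Complex_Main
begin

(* Membership in Ahat is a local condition: a descent occurs right after every black entry and
   right before every white one, and nowhere else. Delete from such a word all entries larger
   than i; consecutive survivors x, y are then related by link below, and conversely a linked
   word of {1..i} extends to one of {1..i+1} exactly by inserting i+1 into a slot, a gap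
   followed by a white entry (or the end) and preceded by a non-black entry (or the start).
   The statistic art counts, for every white (black) entry, the larger entries to its right,
   positively (negatively); inserting i+1 thus adds the white-minus-black balance of the prefix
   in front of it. Along the slots these balances run through 0, 1, ..., a(i+1) - 1, so each
   insertion step contributes the factor [a(i+1)]_q. For the last value 2n+1 the factor is
   [1]_q = 1, and a full linked word of {1..2n+1} has 1 + |W| - |B| = 0 slots, which is
   exactly what forces the boundary conditions of the local description. *)

lemma qint_Suc: "0 \<le> k \<Longrightarrow> qint q (k + 1) = 1 + q * qint q k"
proof -
  assume "0 \<le> k"
  then have "nat (k + 1) = Suc (nat k)" by simp
  then show ?thesis unfolding qint_def
    by (simp add: sum.lessThan_Suc_shift sum_distrib_left del: sum.lessThan_Suc)
qed

lemma qint_1 [simp]: "qint q 1 = 1"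
  by (simp add: qint_def)

lemma perm_length: "is_perm m xs \<Longrightarrow> length xs = m"
  unfolding is_perm_def by (metis card_atLeastAtMost diff_Suc_1 distinct_card)

lemma ent_0 [simp]: "ent xs 0 = 0"
  by (simp add: ent_def)

lemma ent_Suc_nth: "i < length xs \<Longrightarrow> ent xs (Suc i) = xs ! i"
  by (simp add: ent_def)

lemma ent_beyond: "length xs < i \<Longrightarrow> ent xs i = 0"
  by (simp add: ent_def)

lemma perm_ent_range:
  assumes "is_perm m xs" "i \<in> {1..m}"
  shows "ent xs i \<in> {1..m}"
proof -
  have "xs ! (i - 1) \<in> set xs" using assms by (auto simp: perm_length intro!: nth_mem)
  then show ?thesis using assms by (simp add: ent_def perm_length is_perm_def)
qed

lemma perm_ent_inj: "is_perm m xs \<Longrightarrow> inj_on (ent xs) {1..m}"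
proof (rule inj_onI)
  fix i j assume P: "is_perm m xs" and ij: "i \<in> {1..m}" "j \<in> {1..m}" "ent xs i = ent xs j"
  then have "xs ! (i - 1) = xs ! (j - 1)"
    by (simp add: ent_def perm_length)
  then have "i - 1 = j - 1"
    using P ij nth_eq_iff_index_eq[of xs "i - 1" "j - 1"] by (auto simp: is_perm_def perm_length)
  then show "i = j" using ij by auto
qed

lemma perm_ent_image: "is_perm m xs \<Longrightarrow> ent xs ` {1..m} = {1..m}"
  by (intro endo_inj_surj perm_ent_inj) (use perm_ent_range in blast)+

lemma perm_ent_Suc_neq:
  assumes P: "is_perm m xs" and "0 < m" "i \<le> m"
  shows "ent xs i \<noteq> ent xs (Suc i)"
proof (cases "i = 0 \<or> i = m")
  case True
  then show ?thesis
    using assms perm_ent_range[OF P, of 1] perm_ent_range[OF P, of m] ent_beyond[of xs "Suc m"]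
    by (auto simp: perm_length)
next
  case False
  then show ?thesis
    using assms inj_onD[OF perm_ent_inj[OF P], of i "Suc i"] by auto
qed

lemma perm_ent_mem_image_iff:
  assumes "is_perm m xs" "\<And>i. P i \<Longrightarrow> i \<in> {1..m}" "j \<in> {1..m}"
  shows "ent xs j \<in> {ent xs i | i. P i} \<longleftrightarrow> P j"
  using assms inj_onD[OF perm_ent_inj[OF assms(1)], of j] by blast

lemma perm_ent_image_filter:
  assumes "is_perm m xs"
  shows "{ent xs j | j. j \<in> {1..m} \<and> ent xs j \<in> C} = C \<inter> {1..m}"
proof -
  have "{ent xs j | j. j \<in> {1..m} \<and> ent xs j \<in> C} = ent xs ` {1..m} \<inter> C"
    by blast
  then show ?thesis using perm_ent_image[OF assms] by blast
qed

section \<open>Peaks, valleys and the local description of Ahat\<close>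

definition falls :: "nat list \<Rightarrow> nat \<Rightarrow> bool" where
  "falls xs i \<longleftrightarrow> ent xs (Suc i) < ent xs i"

lemma not_falls_0 [simp]: "\<not> falls xs 0"
  by (simp add: falls_def)

lemma perm_falls_last: "is_perm m xs \<Longrightarrow> 0 < m \<Longrightarrow> falls xs m"
  using perm_ent_range[of m xs m] by (simp add: falls_def ent_beyond perm_length)

lemma perm_peak_pos_Suc:
  "is_perm m xs \<Longrightarrow> i < m \<Longrightarrow> peak_pos xs (Suc i) \<longleftrightarrow> \<not> falls xs i \<and> falls xs (Suc i)"
  using perm_ent_Suc_neq[of m xs i] by (auto simp: peak_pos_def falls_def perm_length)

lemma perm_valley_pos_Suc:
  "is_perm m xs \<Longrightarrow> i < m \<Longrightarrow> valley_pos xs (Suc i) \<longleftrightarrow> falls xs i \<and> \<not> falls xs (Suc i)"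
  using perm_ent_Suc_neq[of m xs "Suc i"] by (auto simp: valley_pos_def falls_def perm_length)

lemma perm_ddesc_pos_Suc:
  "is_perm m xs \<Longrightarrow> i < m \<Longrightarrow> ddesc_pos xs (Suc i) \<longleftrightarrow> falls xs i \<and> falls xs (Suc i)"
  by (auto simp: ddesc_pos_def falls_def perm_length)

lemma positions_Suc:
  assumes "j \<in> {1..m}"
  obtains i where "i < m" "j = Suc i"
  using assms by (cases j) auto

definition zigzag :: "nat \<Rightarrow> nat set \<Rightarrow> nat set \<Rightarrow> nat list \<Rightarrow> bool" where
  "zigzag m W B xs \<longleftrightarrow> is_perm m xs
     \<and> (\<forall>i\<in>{1..m}. falls xs i \<longleftrightarrow> ent xs i \<in> B)
     \<and> (\<forall>i<m. falls xs i \<longleftrightarrow> ent xs (Suc i) \<in> W)"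

lemma zigzag_valley_pos_iff:
  assumes Z: "zigzag m W B xs" and WB: "W \<inter> B = {}"
  shows "valley_pos xs j \<longleftrightarrow> j \<in> {1..m} \<and> ent xs j \<in> W"
proof (cases "j \<in> {1..m}")
  case True
  then obtain i where "i < m" "j = Suc i" by (rule positions_Suc)
  then show ?thesis
    using Z WB perm_valley_pos_Suc[of m xs i] unfolding zigzag_def by auto
next
  case False
  then show ?thesis using Z by (auto simp: valley_pos_def zigzag_def perm_length)
qed

lemma zigzag_peak_pos_iff:
  assumes Z: "zigzag m W B xs" and WB: "W \<inter> B = {}"
  shows "peak_pos xs j \<longleftrightarrow> j \<in> {1..m} \<and> ent xs j \<in> B"
proof (cases "j \<in> {1..m}")
  case True
  then obtain i where "i < m" "j = Suc i" by (rule positions_Suc)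
  then show ?thesis
    using Z WB perm_peak_pos_Suc[of m xs i] unfolding zigzag_def by auto
next
  case False
  then show ?thesis using Z by (auto simp: peak_pos_def zigzag_def perm_length)
qed

lemma Ahat_imp_zigzag:
  assumes "xs \<in> Ahat n W B"
  shows "zigzag (2*n+1) W B xs"
proof -
  define m where "m = 2*n+1"
  have P: "is_perm m xs" and no_ddesc: "\<And>j. \<not> ddesc_pos xs j"
    and V: "valleys xs = W" and Pk: "peaks xs = B"
    using assms by (auto simp: Ahat_def primary_def Wstar_def m_def)
  have in_W: "ent xs (Suc i) \<in> W \<longleftrightarrow> valley_pos xs (Suc i)" if "i < m" for i
    using perm_ent_mem_image_iff[OF P, of "valley_pos xs" "Suc i"] that V
    by (auto simp: valleys_def valley_pos_def perm_length[OF P])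
  have in_B: "ent xs (Suc i) \<in> B \<longleftrightarrow> peak_pos xs (Suc i)" if "i < m" for i
    using perm_ent_mem_image_iff[OF P, of "peak_pos xs" "Suc i"] that Pk
    by (auto simp: peaks_def peak_pos_def perm_length[OF P])
  have "falls xs j \<longleftrightarrow> ent xs j \<in> B" if "j \<in> {1..m}" for j
  proof -
    obtain i where "i < m" "j = Suc i" using \<open>j \<in> {1..m}\<close> by (rule positions_Suc)
    then show ?thesis
      using in_B perm_peak_pos_Suc[OF P] perm_ddesc_pos_Suc[OF P] no_ddesc by blast
  qed
  moreover have "falls xs i \<longleftrightarrow> ent xs (Suc i) \<in> W" if "i < m" for i
  proof (cases "Suc i < m")
    case True
    then show ?thesis
      using that in_W perm_valley_pos_Suc[OF P] perm_ddesc_pos_Suc[OF P] no_ddesc by blast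
  next
    case False
    then have "Suc i = m" using that by simp
    then have "falls xs (Suc i)" using perm_falls_last[OF P] by simp
    then show ?thesis
      using that in_W perm_valley_pos_Suc[OF P] perm_ddesc_pos_Suc[OF P] no_ddesc by blast
  qed
  ultimately show ?thesis using P by (simp add: zigzag_def m_def)
qed

lemma zigzag_imp_Ahat:
  assumes Z: "zigzag (2*n+1) W B xs" and WB: "W \<inter> B = {}"
    and Wo: "W \<subseteq> {x\<in>{1..2*n+1}. odd x}" and Bo: "B \<subseteq> {x\<in>{1..2*n+1}. odd x}"
  shows "xs \<in> Ahat n W B"
proof -
  define m where "m = 2*n+1"
  have P: "is_perm m xs" and at_B: "\<And>i. i \<in> {1..m} \<Longrightarrow> falls xs i \<longleftrightarrow> ent xs i \<in> B"
    and at_W: "\<And>i. i < m \<Longrightarrow> falls xs i \<longleftrightarrow> ent xs (Suc i) \<in> W"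
    using Z by (auto simp: zigzag_def m_def)
  have last_B: "ent xs m \<in> B" using at_B[of m] perm_falls_last[OF P] by (simp add: m_def)
  have "is_descent xs i \<Longrightarrow> ent xs i \<in> B \<and> ent xs (Suc i) \<in> W" for i
    using at_B[of i] at_W[of i] by (auto simp: is_descent_def falls_def perm_length[OF P])
  then have "xs \<in> Wstar n" using P last_B Wo Bo by (auto simp: Wstar_def m_def)
  moreover have "\<not> ddesc_pos xs j" for j
  proof
    assume "ddesc_pos xs j"
    then obtain i where "i < m" "j = Suc i" "falls xs i" "falls xs (Suc i)"
      by (metis positions_Suc perm_ddesc_pos_Suc[OF P] ddesc_pos_def perm_length[OF P] atLeastAtMost_iff)
    then show False using at_B[of j] at_W[of i] WB by auto
  qed
  moreover have "ent xs (2*n) < ent xs (2*n+1)"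
  proof -
    have "\<not> falls xs (2*n)" using at_W[of "2*n"] last_B WB by (auto simp: m_def)
    then show ?thesis using perm_ent_Suc_neq[OF P, of "2*n"] by (auto simp: falls_def m_def)
  qed
  moreover have "valleys xs = W"
    using zigzag_valley_pos_iff[OF Z WB] perm_ent_image_filter[OF P, of W] Wo
    by (auto simp: valleys_def m_def)
  moreover have "peaks xs = B"
    using zigzag_peak_pos_iff[OF Z WB] perm_ent_image_filter[OF P, of B] Bo
    by (auto simp: peaks_def m_def)
  ultimately show ?thesis by (simp add: Ahat_def primary_def)
qed

section \<open>The statistic art as a difference of coinversion counts\<close>

fun coinv :: "nat set \<Rightarrow> nat list \<Rightarrow> nat" where
  "coinv P [] = 0"
| "coinv P (x # xs) = (if x \<in> P then length (filter (\<lambda>y. x < y) xs) else 0) + coinv P xs"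

lemma card_smaller_before:
  assumes "k < length xs"
  shows "card {j. j < Suc k \<and> 1 \<le> j \<and> ent xs j \<in> P \<and> ent xs j < ent xs (Suc k)}
       = length (filter (\<lambda>x. x \<in> P \<and> x < xs ! k) (take k xs))"
proof -
  have "{j. j < Suc k \<and> 1 \<le> j \<and> ent xs j \<in> P \<and> ent xs j < ent xs (Suc k)}
      = Suc ` {i. i < k \<and> xs ! i \<in> P \<and> xs ! i < xs ! k}"
  proof (rule set_eqI)
    fix j show "j \<in> {j. j < Suc k \<and> 1 \<le> j \<and> ent xs j \<in> P \<and> ent xs j < ent xs (Suc k)}
        \<longleftrightarrow> j \<in> Suc ` {i. i < k \<and> xs ! i \<in> P \<and> xs ! i < xs ! k}"
      using assms by (cases j) (auto simp: ent_Suc_nth)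
  qed
  moreover have "length (filter (\<lambda>x. x \<in> P \<and> x < xs ! k) (take k xs))
      = card {i. i < k \<and> xs ! i \<in> P \<and> xs ! i < xs ! k}"
    unfolding length_filter_conv_card using assms by (auto intro!: arg_cong[where f = card])
  ultimately show ?thesis by (simp add: card_image)
qed

lemma sum_smaller_before_eq_coinv:
  "(\<Sum>k<length xs. length (filter (\<lambda>x. x \<in> P \<and> x < xs ! k) (take k xs))) = coinv P xs"
proof (induction xs)
  case (Cons x us)
  have "(\<Sum>k<length us. of_bool (x \<in> P \<and> x < us ! k))
      = (if x \<in> P then length (filter (\<lambda>y. x < y) us) else 0)"
    by (simp add: length_filter_conv_card Int_def)
  moreover have "length (filter (\<lambda>y. y \<in> P \<and> y < (x # us) ! Suc k) (take (Suc k) (x # us)))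
      = of_bool (x \<in> P \<and> x < us ! k) + length (filter (\<lambda>y. y \<in> P \<and> y < us ! k) (take k us))"
    for k by simp
  ultimately show ?case
    using Cons.IH by (simp add: sum.lessThan_Suc_shift sum.distrib del: sum.lessThan_Suc)
qed simp

lemma art_sum_eq_coinv:
  "(\<Sum>k=1..length xs. card {j. j < k \<and> 1 \<le> j \<and> ent xs j \<in> P \<and> ent xs j < ent xs k})
     = coinv P xs"
proof -
  have "(\<Sum>k=1..length xs. card {j. j < k \<and> 1 \<le> j \<and> ent xs j \<in> P \<and> ent xs j < ent xs k})
      = (\<Sum>k<length xs. card {j. j < Suc k \<and> 1 \<le> j \<and> ent xs j \<in> P \<and> ent xs j < ent xs (Suc k)})"
    by (simp add: sum.atLeast1_atMost_eq)
  also have "\<dots> = coinv P xs"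
    unfolding sum_smaller_before_eq_coinv[symmetric] by (intro sum.cong refl card_smaller_before) simp
  finally show ?thesis .
qed

lemma zigzag_art:
  assumes Z: "zigzag m W B xs" and WB: "W \<inter> B = {}"
  shows "art xs = int (coinv W xs) - int (coinv B xs)"
proof -
  have len: "length xs = m" using Z by (simp add: zigzag_def perm_length)
  have "art xs = (\<Sum>k=1..length xs.
      int (card {j. j < k \<and> 1 \<le> j \<and> ent xs j \<in> W \<and> ent xs j < ent xs k})
    - int (card {j. j < k \<and> 1 \<le> j \<and> ent xs j \<in> B \<and> ent xs j < ent xs k}))"
    unfolding art_def
    by (intro sum.cong refl arg_cong2[where f = "\<lambda>a b. int (card a) - int (card b)"] Collect_cong)
      (auto simp: zigzag_valley_pos_iff[OF Z WB] zigzag_peak_pos_iff[OF Z WB] len)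
  then show ?thesis
    using art_sum_eq_coinv[of xs W] art_sum_eq_coinv[of xs B] by (simp add: sum_subtractf flip: of_nat_sum)
qed

section \<open>Building words by inserting a maximal entry\<close>

definition insert_at :: "nat \<Rightarrow> nat \<Rightarrow> nat list \<Rightarrow> nat list" where
  "insert_at p x zs = take p zs @ x # drop p zs"

lemma set_insert_at [simp]: "set (insert_at p x zs) = insert x (set zs)"
proof -
  have "set (u @ x # v) = insert x (set (u @ v))" for u v :: "nat list" by auto
  from this[of "take p zs" "drop p zs"] show ?thesis
    unfolding insert_at_def append_take_drop_id .
qed

lemma distinct_insert_at [simp]: "distinct (insert_at p x zs) \<longleftrightarrow> x \<notin> set zs \<and> distinct zs"
proof -
  have "distinct (u @ x # v) \<longleftrightarrow> x \<notin> set (u @ v) \<and> distinct (u @ v)" for u v :: "nat list" by auto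
  from this[of "take p zs" "drop p zs"] show ?thesis
    unfolding insert_at_def append_take_drop_id .
qed

lemma insert_at_inj:
  assumes "insert_at p x zs = insert_at p' x zs'" "x \<notin> set zs" "x \<notin> set zs'"
    "p \<le> length zs" "p' \<le> length zs'"
  shows "zs = zs' \<and> p = p'"
proof -
  have "x \<notin> set (take p zs)" "x \<notin> set (drop p zs)"
    using assms(2) by (meson in_set_takeD in_set_dropD)+
  then have "take p zs = take p' zs' \<and> drop p zs = drop p' zs'"
    using assms(1) append_Cons_eq_iff unfolding insert_at_def by metis
  then show ?thesis
    using assms(4,5) by (metis append_take_drop_id length_take min.absorb2)
qed

lemma successively_iff_ent:
  "successively P xs \<longleftrightarrow> (\<forall>j. Suc j < length xs \<longrightarrow> P (ent xs (Suc j)) (ent xs (Suc (Suc j))))"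
proof -
  have "successively P xs \<longleftrightarrow> (\<forall>j. Suc j < length xs \<longrightarrow> P (xs ! j) (xs ! Suc j))"
    by (induction P xs rule: successively.induct) (auto simp: less_Suc_eq_0_disj)
  then show ?thesis by (simp add: ent_Suc_nth)
qed

lemma length_filter_perm:
  assumes "distinct zs" "set zs = {1..k}" "0 \<notin> P"
  shows "length (filter (\<lambda>x. x \<in> P) zs) = card {x\<in>P. x < Suc k}"
proof -
  have "set (filter (\<lambda>x. x \<in> P) zs) = {x\<in>P. x < Suc k}"
    using assms(2,3) by (auto simp: less_Suc_eq_le) (metis Suc_leI not_gr0)
  then show ?thesis
    using distinct_card[of "filter (\<lambda>x. x \<in> P) zs"] assms(1) by simp
qed

lemma coinv_insert_at_max:
  assumes "\<forall>x\<in>set zs. x < i" "p \<le> length zs"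
  shows "coinv P (insert_at p i zs) = coinv P zs + length (filter (\<lambda>x. x \<in> P) (take p zs))"
  using assms
proof (induction zs arbitrary: p)
  case (Cons x us)
  show ?case
  proof (cases p)
    case 0
    then show ?thesis using Cons.prems by (fastforce simp: insert_at_def filter_empty_conv)
  next
    case (Suc p')
    have "length (filter ((<) x) (insert_at p' i us)) = Suc (length (filter ((<) x) us))"
      using Cons.prems unfolding insert_at_def
      by (subst (3) append_take_drop_id[of p', symmetric], simp del: append_take_drop_id)
    then show ?thesis using Cons Suc by (simp add: insert_at_def)
  qed
qed (simp add: insert_at_def)

context
  fixes W B :: "nat set"
begin

(* If entries larger than x and y were deleted between them, the word rises after x and falls
   into y, so x is not black and y is white; otherwise x, y are adjacent in a zigzag word. *)
definition link :: "nat \<Rightarrow> nat \<Rightarrow> bool" where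
  "link x y \<longleftrightarrow> (y \<notin> W \<longrightarrow> x < y \<and> x \<notin> B) \<and> (y \<in> W \<and> x \<in> B \<longrightarrow> y < x)"

definition linked_words :: "nat \<Rightarrow> nat list set" where
  "linked_words i = {ys. distinct ys \<and> set ys = {1..i} \<and> successively link ys}"

(* In slot and black_then_white the flag b records whether the list is preceded by a black entry. *)
definition slot :: "bool \<Rightarrow> nat list \<Rightarrow> nat \<Rightarrow> bool" where
  "slot b zs p \<longleftrightarrow> p \<le> length zs \<and> (p = length zs \<or> zs ! p \<in> W)
     \<and> (if p = 0 then \<not> b else zs ! (p - 1) \<notin> B)"

fun black_then_white :: "bool \<Rightarrow> nat list \<Rightarrow> bool" where
  "black_then_white b [] = True"
| "black_then_white b (x # zs) \<longleftrightarrow> (b \<longrightarrow> x \<in> W) \<and> black_then_white (x \<in> B) zs"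

definition balance :: "nat list \<Rightarrow> int" where
  "balance zs = int (length (filter (\<lambda>x. x \<in> W) zs)) - int (length (filter (\<lambda>x. x \<in> B) zs))"

definition colour_art :: "nat list \<Rightarrow> int" where
  "colour_art zs = int (coinv W zs) - int (coinv B zs)"

lemma successively_link_black_then_white:
  "successively link zs \<Longrightarrow> (b \<longrightarrow> zs = [] \<or> hd zs \<in> W) \<Longrightarrow> black_then_white b zs"
  by (induction zs arbitrary: b) (auto simp: successively_Cons link_def)

lemma balance_Cons:
  "W \<inter> B = {} \<Longrightarrow> balance (x # zs) = of_bool (x \<in> W) - of_bool (x \<in> B) + balance zs"
  by (auto simp: balance_def)

lemma balance_nonneg:
  "black_then_white b zs \<Longrightarrow> W \<inter> B = {} \<Longrightarrow> 0 \<le> of_bool (\<not> b) + balance zs"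
  by (induction b zs rule: black_then_white.induct) (auto simp: balance_Cons balance_def)

lemma slots_Nil: "{p. slot b [] p} = (if b then {} else {0})"
  by (auto simp: slot_def)

lemma slots_Cons:
  "{p. slot b (x # zs) p} = (if \<not> b \<and> x \<in> W then {0} else {}) \<union> Suc ` {p. slot (x \<in> B) zs p}"
proof (rule set_eqI)
  fix p show "p \<in> {p. slot b (x # zs) p}
      \<longleftrightarrow> p \<in> (if \<not> b \<and> x \<in> W then {0} else {}) \<union> Suc ` {p. slot (x \<in> B) zs p}"
    by (cases p) (auto simp: slot_def nth_Cons' split: if_splits)
qed

lemma finite_slots: "finite {p. slot b zs p}"
  by (rule finite_subset[of _ "{..length zs}"]) (auto simp: slot_def)

lemma sum_slots_Cons:
  fixes q :: "'a::field"
  assumes "W \<inter> B = {}" "q \<noteq> 0"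
  shows "(\<Sum>p | slot b (x # zs) p. q powi balance (take p (x # zs)))
       = of_bool (\<not> b \<and> x \<in> W)
         + q powi (of_bool (x \<in> W) - of_bool (x \<in> B)) * (\<Sum>p | slot (x \<in> B) zs p. q powi balance (take p zs))"
proof -
  have "(\<Sum>p | slot b (x # zs) p. q powi balance (take p (x # zs)))
      = of_bool (\<not> b \<and> x \<in> W) + (\<Sum>p\<in>Suc ` {p. slot (x \<in> B) zs p}. q powi balance (take p (x # zs)))"
    unfolding slots_Cons by (subst sum.union_disjoint) (auto simp: finite_slots balance_def)
  then show ?thesis
    using assms by (simp add: sum.reindex sum_distrib_left balance_Cons power_int_add)
qed

(* Reading b as 0 or 1, the prefix balances at the slots are b, b + 1, ..., b + a - 1,
   where a = 1 - b + balance zs. *)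
lemma sum_slots:
  fixes q :: "'a::field"
  assumes "black_then_white b zs" "W \<inter> B = {}" "q \<noteq> 0"
  shows "(\<Sum>p | slot b zs p. q powi balance (take p zs))
       = q powi of_bool b * qint q (of_bool (\<not> b) + balance zs)"
  using assms
proof (induction b zs rule: black_then_white.induct)
  case (1 b)
  then show ?case by (auto simp: slots_Nil balance_def qint_def)
next
  case (2 b x zs)
  then have nonneg: "0 \<le> of_bool (x \<notin> B) + balance zs"
    using balance_nonneg by simp
  have S: "(\<Sum>p | slot b (x # zs) p. q powi balance (take p (x # zs)))
      = of_bool (\<not> b \<and> x \<in> W) + q powi (of_bool (x \<in> W) - of_bool (x \<in> B))
        * (q powi of_bool (x \<in> B) * qint q (of_bool (x \<notin> B) + balance zs))"
    using 2 by (simp add: sum_slots_Cons)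
  consider "x \<in> W" "x \<notin> B" | "x \<in> B" "x \<notin> W" "\<not> b" | "x \<notin> W" "x \<notin> B" "\<not> b"
    using 2 by auto
  then show ?case
  proof cases
    case 1
    then show ?thesis using S "2.prems"(2) qint_Suc[OF nonneg, of q]
      by (auto simp: balance_Cons algebra_simps)
  next
    case 2
    then show ?thesis using S "2.prems"(2,3) by (simp add: balance_Cons power_int_minus)
  next
    case 3
    then show ?thesis using S "2.prems"(2) by (simp add: balance_Cons)
  qed
qed

lemma card_slots:
  assumes "black_then_white False zs" "W \<inter> B = {}"
  shows "card {p. slot False zs p} = nat (1 + balance zs)"
proof -
  have "(of_nat (card {p. slot False zs p}) :: rat) = of_nat (nat (1 + balance zs))"
    using sum_slots[OF assms, of "1::rat"] by (simp add: qint_def)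
  then show ?thesis by (simp only: of_nat_eq_iff)
qed

lemma slot_False_iff_take_drop:
  assumes "p \<le> length zs"
  shows "slot False zs p \<longleftrightarrow> (drop p zs = [] \<or> hd (drop p zs) \<in> W) \<and> (take p zs = [] \<or> last (take p zs) \<notin> B)"
proof (cases "p < length zs")
  case True
  then have "hd (drop p zs) = zs ! p" by (simp add: hd_drop_conv_nth)
  moreover have "last (take p zs) = zs ! (p - 1)" if "0 < p"
    using last_conv_nth[of "take p zs"] that True by (auto simp: min_def dest: gr_implies_not0)
  ultimately show ?thesis using True by (auto simp: slot_def)
next
  case False
  then have "p = length zs" using assms by simp
  moreover have "last zs = zs ! (p - 1)" if "0 < p"
    using last_conv_nth[of zs] that \<open>p = length zs\<close> by auto
  ultimately show ?thesis by (auto simp: slot_def)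
qed

lemma successively_link_insert_at:
  assumes "\<forall>x\<in>set zs. x < i" "p \<le> length zs"
  shows "successively link (insert_at p i zs) \<longleftrightarrow> successively link zs \<and> slot False zs p"
proof -
  define u v where "u = take p zs" and "v = drop p zs"
  have into: "link (last u) i \<longleftrightarrow> last u \<notin> B" if "u \<noteq> []"
  proof -
    have "last u < i" using assms(1) last_in_set[OF that] by (auto simp: u_def dest: in_set_takeD)
    then show ?thesis by (auto simp: link_def)
  qed
  have out: "link i (hd v) \<longleftrightarrow> hd v \<in> W" if "v \<noteq> []"
  proof -
    have "hd v < i" using assms(1) hd_in_set[OF that] by (auto simp: v_def dest: in_set_dropD)
    then show ?thesis by (auto simp: link_def)
  qed
  have slot: "slot False zs p \<longleftrightarrow> (v = [] \<or> hd v \<in> W) \<and> (u = [] \<or> last u \<notin> B)"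
    using slot_False_iff_take_drop[OF assms(2)] by (simp add: u_def v_def)
  have "successively link zs \<longleftrightarrow> successively link u \<and> successively link v
      \<and> (u = [] \<or> v = [] \<or> link (last u) (hd v))"
    using successively_append_iff[of link u v] by (simp add: u_def v_def)
  moreover have "insert_at p i zs = u @ i # v"
    by (simp add: insert_at_def u_def v_def)
  then have "successively link (insert_at p i zs) \<longleftrightarrow> successively link u \<and> successively link v
      \<and> (u = [] \<or> link (last u) i) \<and> (v = [] \<or> link i (hd v))"
    by (auto simp: successively_append_iff successively_Cons)
  moreover have "link (last u) (hd v)" if "last u \<notin> B" "hd v \<in> W"
    using that by (simp add: link_def)
  ultimately show ?thesis using into out slot by blast
qed

lemma slot_False_iff_ent:
  "p \<le> length zs \<Longrightarrow> slot False zs p \<longleftrightarrow> (p = length zs \<or> ent zs (Suc p) \<in> W) \<and> (p = 0 \<or> ent zs p \<notin> B)"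
  by (cases "p = length zs") (auto simp: slot_def ent_def Suc_le_eq)

lemma colour_art_insert_at_max:
  assumes "\<forall>x\<in>set zs. x < i" "p \<le> length zs"
  shows "colour_art (insert_at p i zs) = colour_art zs + balance (take p zs)"
  using coinv_insert_at_max[OF assms, of W] coinv_insert_at_max[OF assms, of B]
  by (simp add: colour_art_def balance_def)

lemma finite_linked_words: "finite (linked_words i)"
proof (rule finite_subset)
  show "linked_words i \<subseteq> {xs. set xs \<subseteq> {1..i} \<and> length xs = i}"
    unfolding linked_words_def using distinct_card by fastforce
qed (rule finite_lists_length_eq, simp)

lemma linked_words_0: "linked_words 0 = {[]}"
  by (auto simp: linked_words_def)

lemma linked_words_Suc:
  "linked_words (Suc k)
     = (\<lambda>(zs, p). insert_at p (Suc k) zs) ` (SIGMA zs:linked_words k. {p. slot False zs p})"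
proof (intro set_eqI iffI)
  fix ys assume ys: "ys \<in> linked_words (Suc k)"
  then have "Suc k \<in> set ys" by (simp add: linked_words_def)
  then obtain as bs where split: "ys = as @ Suc k # bs" by (meson split_list)
  define zs where "zs = as @ bs"
  have ins: "ys = insert_at (length as) (Suc k) zs"
    by (simp add: split zs_def insert_at_def)
  have "Suc k \<notin> set zs" "distinct zs"
    using ys ins by (auto simp: linked_words_def)
  have "set zs = set ys - {Suc k}"
    using ins \<open>Suc k \<notin> set zs\<close> by simp
  also have "\<dots> = {1..k}"
    using ys by (simp add: linked_words_def atLeastAtMostSuc_conv)
  finally have set_zs: "set zs = {1..k}" .
  have "\<forall>x\<in>set zs. x < Suc k" using set_zs by auto
  moreover have "length as \<le> length zs" by (simp add: zs_def)
  ultimately have "successively link zs \<and> slot False zs (length as)"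
    using ys ins successively_link_insert_at by (simp add: linked_words_def)
  then have "(zs, length as) \<in> (SIGMA zs:linked_words k. {p. slot False zs p})"
    using set_zs \<open>distinct zs\<close> by (simp add: linked_words_def)
  then show "ys \<in> (\<lambda>(zs, p). insert_at p (Suc k) zs) ` (SIGMA zs:linked_words k. {p. slot False zs p})"
    using ins by (auto intro!: image_eqI[where x = "(zs, length as)"])
next
  fix ys assume "ys \<in> (\<lambda>(zs, p). insert_at p (Suc k) zs) ` (SIGMA zs:linked_words k. {p. slot False zs p})"
  then obtain zs p where zs: "zs \<in> linked_words k" "slot False zs p" and ys: "ys = insert_at p (Suc k) zs"
    by auto
  have set_zs: "set zs = {1..k}" and "distinct zs" and "successively link zs"
    using zs by (auto simp: linked_words_def)
  have "\<forall>x\<in>set zs. x < Suc k" "p \<le> length zs"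
    using set_zs zs(2) by (auto simp: slot_def)
  then have "successively link ys"
    using successively_link_insert_at zs(2) \<open>successively link zs\<close> ys by simp
  moreover have "set ys = {1..Suc k}" "distinct ys"
    using set_zs \<open>distinct zs\<close> ys by auto
  ultimately show "ys \<in> linked_words (Suc k)"
    by (simp add: linked_words_def)
qed

lemma inj_on_insert_max:
  "inj_on (\<lambda>(zs, p). insert_at p (Suc k) zs) (SIGMA zs:linked_words k. {p. slot False zs p})"
proof (rule inj_onI, clarify)
  fix zs p zs' p'
  assume "zs \<in> linked_words k" "slot False zs p" "zs' \<in> linked_words k" "slot False zs' p'"
    and "insert_at p (Suc k) zs = insert_at p' (Suc k) zs'"
  then show "zs = zs' \<and> p = p'"
    by (intro insert_at_inj) (auto simp: linked_words_def slot_def)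
qed

lemma balance_linked_word:
  assumes "zs \<in> linked_words k" "0 \<notin> W" "0 \<notin> B"
  shows "1 + balance zs = avec W B (Suc k)"
  using assms length_filter_perm[of zs k W] length_filter_perm[of zs k B]
  by (simp add: linked_words_def balance_def avec_def)

lemma sum_insertions:
  fixes q :: "'a::field"
  assumes zs: "zs \<in> linked_words k" and WB: "W \<inter> B = {}" and "q \<noteq> 0" "0 \<notin> W" "0 \<notin> B"
  shows "(\<Sum>p | slot False zs p. q powi colour_art (insert_at p (Suc k) zs))
       = q powi colour_art zs * qint q (avec W B (Suc k))"
proof -
  have "\<forall>x\<in>set zs. x < Suc k" using zs by (auto simp: linked_words_def)
  then have "(\<Sum>p | slot False zs p. q powi colour_art (insert_at p (Suc k) zs))
      = (\<Sum>p | slot False zs p. q powi colour_art zs * q powi balance (take p zs))"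
    using \<open>q \<noteq> 0\<close> by (intro sum.cong refl) (simp add: colour_art_insert_at_max slot_def power_int_add)
  also have "\<dots> = q powi colour_art zs * qint q (1 + balance zs)"
    using sum_slots[of False zs q] successively_link_black_then_white[of zs False] zs WB \<open>q \<noteq> 0\<close>
    by (simp add: linked_words_def flip: sum_distrib_left)
  finally show ?thesis
    using balance_linked_word assms by simp
qed

lemma sum_linked_words:
  fixes q :: "'a::field"
  assumes "W \<inter> B = {}" "q \<noteq> 0" "0 \<notin> W" "0 \<notin> B"
  shows "(\<Sum>ys\<in>linked_words i. q powi colour_art ys) = (\<Prod>j=1..i. qint q (avec W B j))"
proof (induction i)
  case 0
  then show ?case by (simp add: linked_words_0 colour_art_def)
next
  case (Suc k)
  have "(\<Sum>ys\<in>linked_words (Suc k). q powi colour_art ys)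
      = (\<Sum>zs\<in>linked_words k. \<Sum>p | slot False zs p. q powi colour_art (insert_at p (Suc k) zs))"
    unfolding linked_words_Suc sum.reindex[OF inj_on_insert_max]
    by (simp add: case_prod_unfold sum.Sigma finite_linked_words finite_slots)
  also have "\<dots> = (\<Sum>zs\<in>linked_words k. q powi colour_art zs) * qint q (avec W B (Suc k))"
    using assms by (simp add: sum_insertions sum_distrib_right)
  finally show ?case using Suc.IH by simp
qed

lemma zigzag_imp_linked_word:
  assumes Z: "zigzag m W B xs"
  shows "xs \<in> linked_words m"
proof -
  have P: "is_perm m xs" and at_B: "\<And>i. i \<in> {1..m} \<Longrightarrow> falls xs i \<longleftrightarrow> ent xs i \<in> B"
    and at_W: "\<And>i. i < m \<Longrightarrow> falls xs i \<longleftrightarrow> ent xs (Suc i) \<in> W"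
    using Z by (auto simp: zigzag_def)
  have "link (ent xs (Suc j)) (ent xs (Suc (Suc j)))" if "Suc j < m" for j
    using that at_B[of "Suc j"] at_W[of "Suc j"] perm_ent_Suc_neq[OF P, of "Suc j"]
    by (auto simp: link_def falls_def)
  then show ?thesis
    using P by (simp add: linked_words_def successively_iff_ent is_perm_def perm_length[OF P])
qed

(* A full word has 1 + |W| - |B| = 0 slots. *)
lemma linked_word_no_slot:
  assumes WB: "W \<inter> B = {}" and "W \<subseteq> {1..m}" "B \<subseteq> {1..m}" "card B = card W + 1"
    and xs: "xs \<in> linked_words m"
  shows "\<not> slot False xs p"
proof -
  have "{x\<in>W. x < Suc m} = W" "{x\<in>B. x < Suc m} = B" "0 \<notin> W" "0 \<notin> B"
    using assms(2,3) by auto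
  then have "1 + balance xs = 0"
    using xs assms(4) length_filter_perm[of xs m W] length_filter_perm[of xs m B]
    by (auto simp: linked_words_def balance_def)
  then have "card {p. slot False xs p} = 0"
    using card_slots[OF successively_link_black_then_white WB, of xs] xs by (simp add: linked_words_def)
  then show ?thesis using finite_slots[of False xs] by auto
qed

lemma linked_word_imp_zigzag:
  assumes "W \<inter> B = {}" and sub: "W \<subseteq> {1..m}" "B \<subseteq> {1..m}" and card: "card B = card W + 1"
    and xs: "xs \<in> linked_words m"
  shows "zigzag m W B xs"
proof -
  have P: "is_perm m xs" and len: "length xs = m"
    using xs by (auto simp: linked_words_def is_perm_def perm_length)
  have "0 < m" using sub(2) card by (cases m) auto
  have no_slot: "(p \<noteq> m \<and> ent xs (Suc p) \<notin> W) \<or> (p \<noteq> 0 \<and> ent xs p \<in> B)" if "p \<le> m" for p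
    using slot_False_iff_ent[of p xs] linked_word_no_slot[OF assms, of p] that len by auto
  have link: "link (ent xs (Suc j)) (ent xs (Suc (Suc j)))" if "Suc j < m" for j
    using xs that len by (simp add: linked_words_def successively_iff_ent)
  have inner: "(falls xs (Suc j) \<longleftrightarrow> ent xs (Suc j) \<in> B) \<and> (falls xs (Suc j) \<longleftrightarrow> ent xs (Suc (Suc j)) \<in> W)"
    if "Suc j < m" for j
    using link[OF that] no_slot[of "Suc j"] that perm_ent_Suc_neq[OF P \<open>0 < m\<close>, of "Suc j"]
    by (auto simp: link_def falls_def)
  have "falls xs i \<longleftrightarrow> ent xs i \<in> B" if "i \<in> {1..m}" for i
  proof (cases "i = m")
    case True
    then show ?thesis using perm_falls_last[OF P \<open>0 < m\<close>] no_slot[of m] \<open>0 < m\<close> by simp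
  next
    case False
    then show ?thesis using that inner[of "i - 1"] by auto
  qed
  moreover have "falls xs i \<longleftrightarrow> ent xs (Suc i) \<in> W" if "i < m" for i
  proof (cases i)
    case 0
    then show ?thesis using no_slot[of 0] that by simp
  next
    case (Suc j)
    then show ?thesis using that inner[of j] by blast
  qed
  ultimately show ?thesis using P by (simp add: zigzag_def)
qed

end

lemma Ahat_eq_linked_words:
  assumes "admissible n W B"
  shows "Ahat n W B = linked_words W B (2*n+1)"
proof -
  have WB: "W \<inter> B = {}" and odd: "W \<subseteq> {x\<in>{1..2*n+1}. odd x}" "B \<subseteq> {x\<in>{1..2*n+1}. odd x}"
    and "card B = card W + 1"
    using assms by (auto simp: admissible_def)
  then have sub: "W \<subseteq> {1..2*n+1}" "B \<subseteq> {1..2*n+1}" by auto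
  show ?thesis
  proof (intro set_eqI iffI)
    fix xs assume "xs \<in> Ahat n W B"
    then show "xs \<in> linked_words W B (2*n+1)"
      using Ahat_imp_zigzag zigzag_imp_linked_word by blast
  next
    fix xs assume "xs \<in> linked_words W B (2*n+1)"
    then show "xs \<in> Ahat n W B"
      using zigzag_imp_Ahat[OF _ WB odd] linked_word_imp_zigzag[OF WB sub \<open>card B = card W + 1\<close>]
      by blast
  qed
qed

lemma avec_last:
  assumes "admissible n W B"
  shows "avec W B (2*n+1) = 1"
proof -
  have "W \<subseteq> {1..2*n+1}" "B \<subseteq> {1..2*n+1}" "W \<inter> B = {}" "2*n+1 \<in> B" "card B = card W + 1"
    using assms by (auto simp: admissible_def)
  then have "x < 2*n+1" if "x \<in> W" for x
    using that by (metis IntI atLeastAtMost_iff empty_iff le_neq_implies_less subsetD)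
  then have "{x\<in>W. x < 2*n+1} = W" by blast
  moreover have "{x\<in>B. x < 2*n+1} = B - {2*n+1}"
    using \<open>B \<subseteq> {1..2*n+1}\<close> by fastforce
  ultimately show ?thesis
    using card_Diff_singleton[of "2*n+1" B] \<open>2*n+1 \<in> B\<close> \<open>card B = card W + 1\<close>
    by (simp add: avec_def)
qed

theorem mainTheorem7:
  fixes n :: nat and Wh Bl :: "nat set" and q :: "'a::field"
  assumes "n \<ge> 1" and "admissible n Wh Bl" and "q \<noteq> 0"
  shows "(\<Sum>\<sigma>\<in>Ahat n Wh Bl. q powi art \<sigma>) = (\<Prod>i=1..2*n. qint q (avec Wh Bl i))"
proof -
  have WB: "Wh \<inter> Bl = {}" and "0 \<notin> Wh" "0 \<notin> Bl"
    using assms(2) by (auto simp: admissible_def)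
  have "art \<sigma> = colour_art Wh Bl \<sigma>" if "\<sigma> \<in> Ahat n Wh Bl" for \<sigma>
    using zigzag_art[OF Ahat_imp_zigzag[OF that] WB] by (simp add: colour_art_def)
  then have "(\<Sum>\<sigma>\<in>Ahat n Wh Bl. q powi art \<sigma>) = (\<Sum>\<sigma>\<in>Ahat n Wh Bl. q powi colour_art Wh Bl \<sigma>)"
    by simp
  also have "\<dots> = (\<Sum>\<sigma>\<in>linked_words Wh Bl (2*n+1). q powi colour_art Wh Bl \<sigma>)"
    by (simp only: Ahat_eq_linked_words[OF assms(2)])
  also have "\<dots> = (\<Prod>i=1..2*n+1. qint q (avec Wh Bl i))"
    using sum_linked_words[OF WB assms(3)] \<open>0 \<notin> Wh\<close> \<open>0 \<notin> Bl\<close> by blast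
  also have "\<dots> = (\<Prod>i=1..2*n. qint q (avec Wh Bl i))"
    using avec_last[OF assms(2)] by simp
  finally show ?thesis .
qed

end
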